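(* Let $V$ be a finite set, $C=(C_R)_{R\subseteq V}$ non-negative capacities and $D=(D_S)_{S\subseteq V}$ non-negative demands. Then \[ \mathrm{MinHypCut}(V,C,D)=\min_{\delta\in\Delta_1(V)}\frac{C\cdot\delta}{D\cdot\delta}, \] where $\Delta_1(V)$ is the set of all $\ell_1$-embeddable diversities on $V$.
   Context: A diversity on $V$ is a function $\delta$ from subsets of $V$ to $\mathbb{R}$ with $\delta(A)\ge 0$, $\delta(A)=0$ whenever $|A|\le 1$ (values $0$ on larger sets are allowed), and $\delta(A\cup B)+\delta(B\cup C)\ge\delta(A\cup C)$ whenever $B\neq\emptyset$. Write $C\cdot\delta=\sum_{R\subseteq V}C_R\delta(R)$ and $D\cdot\delta=\sum_{S\subseteq V}D_S\delta(S)$; quotients are considered only where the denominator is nonzero. The $\ell_1^m$ diversity is $(\mathbb{R}^m,\delta_1)$ with $\delta_1(A)=\sum_{i=1}^m\max\{|a_i-b_i|:a,b\in A\}$; a diversity $\delta$ on $V$ is $\ell_1$-embeddable if there are $m$ and $\phi:V\to\mathbb{R}^m$ with $\delta(A)=\delta_1(\phi(A))$ for all $A\subseteq V$. For $U\subseteq V$ let $\partial U$ be the set of subsets of $V$ meeting both $U$ and $V\setminus U$, and $\mathrm{MinHypCut}(V,C,D)=\min_{U\subseteq V}\frac{\sum_{A\in\partial U}C_A}{\sum_{S\in\partial U}D_S}$. *)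

theory Defs
  imports Complex_Main
begin

definition diversity :: "'a set \<Rightarrow> ('a set \<Rightarrow> real) \<Rightarrow> bool" where
  "diversity V \<delta> \<longleftrightarrow>
     (\<forall>A. A \<subseteq> V \<longrightarrow> \<delta> A \<ge> 0) \<and>
     (\<forall>A. A \<subseteq> V \<longrightarrow> card A \<le> 1 \<longrightarrow> \<delta> A = 0) \<and>
     (\<forall>A B C. A \<subseteq> V \<longrightarrow> B \<subseteq> V \<longrightarrow> C \<subseteq> V \<longrightarrow> B \<noteq> {} \<longrightarrow>
        \<delta> (A \<union> B) + \<delta> (B \<union> C) \<ge> \<delta> (A \<union> C))"

text \<open>The l1^m diversity of a finite set of points of R^m (points as nat \<Rightarrow> real,
  only coordinates i < m matter); the empty set gets diversity 0.\<close>
definition delta1 :: "nat \<Rightarrow> (nat \<Rightarrow> real) set \<Rightarrow> real" where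
  "delta1 m P = (\<Sum>i<m. if P = {} then 0
                         else Max {\<bar>a i - b i\<bar> | a b. a \<in> P \<and> b \<in> P})"

definition l1_embeddable :: "'a set \<Rightarrow> ('a set \<Rightarrow> real) \<Rightarrow> bool" where
  "l1_embeddable V \<delta> \<longleftrightarrow>
     (\<exists>(m::nat) (\<phi>::'a \<Rightarrow> nat \<Rightarrow> real). \<forall>A. A \<subseteq> V \<longrightarrow> \<delta> A = delta1 m (\<phi> ` A))"

definition Delta1 :: "'a set \<Rightarrow> ('a set \<Rightarrow> real) set" where
  "Delta1 V = {\<delta>. diversity V \<delta> \<and> l1_embeddable V \<delta>}"

definition dot :: "'a set \<Rightarrow> ('a set \<Rightarrow> real) \<Rightarrow> ('a set \<Rightarrow> real) \<Rightarrow> real" where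
  "dot V C \<delta> = (\<Sum>R\<in>Pow V. C R * \<delta> R)"

definition boundary :: "'a set \<Rightarrow> 'a set \<Rightarrow> 'a set set" where
  "boundary V U = {A. A \<subseteq> V \<and> A \<inter> U \<noteq> {} \<and> A \<inter> (V - U) \<noteq> {}}"

definition MinHypCut :: "'a set \<Rightarrow> ('a set \<Rightarrow> real) \<Rightarrow> ('a set \<Rightarrow> real) \<Rightarrow> real" where
  "MinHypCut V C D = Min {(\<Sum>A\<in>boundary V U. C A) / (\<Sum>S\<in>boundary V U. D S) | U.
                           U \<subseteq> V \<and> (\<Sum>S\<in>boundary V U. D S) \<noteq> 0}"

end

theory Submission
  imports Defs "HOL-Analysis.Analysis"
begin

text \<open>
  One coordinate h of an \<open>\<ell>\<^sub>1\<close>-embedding contributes the spread max h - min h of each set,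
  and this spread is the integral over all thresholds t of the cut diversity of the
  cut {h \<le> t}. Hence C\<cdot>\<delta> and D\<cdot>\<delta> are integrals of cut capacities and cut demands, so
  their ratio is at least the minimum cut ratio. Conversely every cut diversity is
  \<open>\<ell>\<^sub>1\<close>-embeddable in one dimension, and the optimal cut attains the minimum.
\<close>

definition cut_diversity :: "'a set \<Rightarrow> 'a set \<Rightarrow> real" where
  "cut_diversity U A = (if A \<inter> U \<noteq> {} \<and> A - U \<noteq> {} then 1 else 0)"

definition spread :: "('a \<Rightarrow> real) \<Rightarrow> 'a set \<Rightarrow> real" where
  "spread h A = (if A = {} then 0 else Max (h ` A) - Min (h ` A))"

lemma cut_diversity_nonneg: "cut_diversity U A \<ge> 0"
  by (simp add: cut_diversity_def)

lemma diversity_cut_diversity: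
  assumes "finite V"
  shows "diversity V (cut_diversity U)"
  unfolding diversity_def
proof (intro conjI allI impI)
  fix A assume A: "A \<subseteq> V" "card A \<le> 1"
  show "cut_diversity U A = 0"
  proof (rule ccontr)
    assume "cut_diversity U A \<noteq> 0"
    then obtain a b where "a \<in> A" "b \<in> A" "a \<in> U" "b \<notin> U"
      by (auto simp: cut_diversity_def split: if_splits)
    then have "card {a, b} \<le> card A" "a \<noteq> b"
      using A assms by (auto intro: card_mono finite_subset)
    then show False using A by simp
  qed
next
  fix A B C :: "'a set" assume "B \<noteq> {}"
  then have "cut_diversity U (A \<union> C) = 1 \<Longrightarrow>
      cut_diversity U (A \<union> B) = 1 \<or> cut_diversity U (B \<union> C) = 1"
    unfolding cut_diversity_def by (auto split: if_splits)
  moreover have "cut_diversity U (A \<union> C) \<in> {0, 1}"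
    by (simp add: cut_diversity_def)
  ultimately show "cut_diversity U (A \<union> C) \<le> cut_diversity U (A \<union> B) + cut_diversity U (B \<union> C)"
    using cut_diversity_nonneg[of U "A \<union> B"] cut_diversity_nonneg[of U "B \<union> C"] by force
qed (simp add: cut_diversity_nonneg)

lemma boundary_Int_self: "boundary V (V \<inter> U) = boundary V U"
  by (auto simp: boundary_def)

lemma dot_cut_diversity:
  assumes "finite V"
  shows "dot V X (cut_diversity U) = (\<Sum>A\<in>boundary V U. X A)"
proof -
  have "dot V X (cut_diversity U) = (\<Sum>R\<in>Pow V. if R \<in> boundary V U then X R else 0)"
    unfolding dot_def by (rule sum.cong) (auto simp: cut_diversity_def boundary_def)
  also have "\<dots> = (\<Sum>R\<in>Pow V \<inter> boundary V U. X R)"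
    using assms by (simp add: sum.inter_restrict)
  also have "Pow V \<inter> boundary V U = boundary V U"
    by (auto simp: boundary_def)
  finally show ?thesis .
qed

lemma Max_abs_diff_eq:
  fixes g :: "'b \<Rightarrow> real"
  assumes "finite P" "P \<noteq> {}"
  shows "Max {\<bar>g a - g b\<bar> | a b. a \<in> P \<and> b \<in> P} = Max (g ` P) - Min (g ` P)"
proof (rule Max_eqI)
  have "{\<bar>g a - g b\<bar> | a b. a \<in> P \<and> b \<in> P} = (\<lambda>(a, b). \<bar>g a - g b\<bar>) ` (P \<times> P)"
    by auto
  then show "finite {\<bar>g a - g b\<bar> | a b. a \<in> P \<and> b \<in> P}"
    using assms by simp
  have fin: "finite (g ` P)" "g ` P \<noteq> {}"
    using assms by auto
  show "y \<le> Max (g ` P) - Min (g ` P)" if "y \<in> {\<bar>g a - g b\<bar> | a b. a \<in> P \<and> b \<in> P}" for y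
  proof -
    from that obtain a b where y: "y = \<bar>g a - g b\<bar>" "a \<in> P" "b \<in> P"
      by blast
    then have "g a \<le> Max (g ` P)" "g b \<le> Max (g ` P)" "Min (g ` P) \<le> g a" "Min (g ` P) \<le> g b"
      using fin by auto
    then show ?thesis
      using y by auto
  qed
  obtain a where "a \<in> P" "g a = Max (g ` P)"
    using fin Max_in by (metis imageE)
  moreover obtain b where "b \<in> P" "g b = Min (g ` P)"
    using fin Min_in by (metis imageE)
  moreover have "Min (g ` P) \<le> Max (g ` P)"
    using fin by (meson Max_ge Min_le ex_in_conv order_trans)
  ultimately show "Max (g ` P) - Min (g ` P) \<in> {\<bar>g a - g b\<bar> | a b. a \<in> P \<and> b \<in> P}"
    by (metis (mono_tags, lifting) abs_of_nonneg diff_ge_0_iff_ge mem_Collect_eq)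
qed

lemma delta1_image_eq_sum_spread:
  assumes "finite A"
  shows "delta1 m (\<phi> ` A) = (\<Sum>i<m. spread (\<lambda>v. \<phi> v i) A)"
  unfolding delta1_def
proof (rule sum.cong[OF refl])
  fix i
  show "(if \<phi> ` A = {} then 0 else Max {\<bar>a i - b i\<bar> | a b. a \<in> \<phi> ` A \<and> b \<in> \<phi> ` A})
        = spread (\<lambda>v. \<phi> v i) A"
    using assms Max_abs_diff_eq[of "\<phi> ` A" "\<lambda>a. a i"]
    by (auto simp: spread_def image_image)
qed

lemma dot_l1_embedding:
  assumes "finite V" "\<forall>A. A \<subseteq> V \<longrightarrow> \<delta> A = delta1 m (\<phi> ` A)"
  shows "dot V X \<delta> = (\<Sum>i<m. dot V X (spread (\<lambda>v. \<phi> v i)))"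
proof -
  have "dot V X \<delta> = (\<Sum>R\<in>Pow V. \<Sum>i<m. X R * spread (\<lambda>v. \<phi> v i) R)"
    unfolding dot_def using assms
    by (intro sum.cong) (auto simp: delta1_image_eq_sum_spread sum_distrib_left finite_subset)
  then show ?thesis
    by (simp add: dot_def sum.swap[of _ "Pow V"])
qed

lemma spread_indicator: "spread (indicator U) A = cut_diversity U A"
proof -
  consider "A = {}" | "A \<noteq> {}" "A \<subseteq> U" | "A \<noteq> {}" "A \<inter> U = {}" | "A \<inter> U \<noteq> {}" "A - U \<noteq> {}"
    by blast
  then show ?thesis
  proof cases
    case 2
    then have "indicator U ` A = (\<lambda>_. 1::real) ` A"
      by (intro image_cong) (auto simp: indicator_def)
    then show ?thesis using 2 by (auto simp: spread_def cut_diversity_def image_constant_conv)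
  next
    case 3
    then have "indicator U ` A = (\<lambda>_. 0::real) ` A"
      by (intro image_cong) (auto simp: indicator_def)
    then show ?thesis using 3 by (auto simp: spread_def cut_diversity_def image_constant_conv)
  next
    case 4
    then have "indicator U ` A = {0, 1::real}"
      by (auto simp: indicator_def image_iff)
    then show ?thesis using 4 by (auto simp: spread_def cut_diversity_def)
  qed (simp add: spread_def cut_diversity_def)
qed

lemma l1_embeddable_cut_diversity:
  assumes "finite V"
  shows "l1_embeddable V (cut_diversity U)"
  unfolding l1_embeddable_def
proof (intro exI allI impI)
  fix A assume "A \<subseteq> V"
  then have "finite A"
    using assms finite_subset by blast
  then show "cut_diversity U A = delta1 1 ((\<lambda>v i. indicator U v) ` A)"
    by (simp add: delta1_image_eq_sum_spread spread_indicator)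
qed

lemma has_integral_cut_diversity_threshold:
  assumes "finite A"
  shows "((\<lambda>t. cut_diversity {v. h v \<le> t} A) has_integral spread h A) UNIV"
proof (cases "A = {}")
  case True
  then show ?thesis by (simp add: cut_diversity_def spread_def)
next
  case False
  let ?a = "Min (h ` A)" and ?b = "Max (h ` A)"
  have fin: "finite (h ` A)" "h ` A \<noteq> {}"
    using assms False by auto
  have "?a \<le> ?b"
    using fin by (meson Max_ge Min_le ex_in_conv order_trans)
  then have "((\<lambda>t. 1::real) has_integral (?b - ?a)) {?a..?b}"
    using has_integral_const_real[of "1::real" ?a ?b] by simp
  then have indicator_integral: "((\<lambda>t. if t \<in> {?a..?b} then 1 else 0) has_integral (?b - ?a)) UNIV"
    by (subst has_integral_restrict_UNIV)
  have spike: "cut_diversity {v. h v \<le> t} A = (if t \<in> {?a..?b} then 1 else 0)"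
    if "t \<in> UNIV - {?b}" for t
  proof -
    have "A \<inter> {v. h v \<le> t} \<noteq> {} \<longleftrightarrow> (\<exists>x\<in>A. h x \<le> t)"
      "A - {v. h v \<le> t} \<noteq> {} \<longleftrightarrow> (\<exists>x\<in>A. t < h x)"
      by (auto simp: not_le)
    moreover have "(\<exists>x\<in>A. h x \<le> t) \<longleftrightarrow> ?a \<le> t" "(\<exists>x\<in>A. t < h x) \<longleftrightarrow> t < ?b"
      using fin by (auto simp: Min_le_iff Max_gr_iff)
    moreover have "t \<in> {?a..?b} \<longleftrightarrow> ?a \<le> t \<and> t < ?b"
      using that by auto
    ultimately show ?thesis
      unfolding cut_diversity_def by metis
  qed
  have "((\<lambda>t. cut_diversity {v. h v \<le> t} A) has_integral (?b - ?a)) UNIV"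
    by (rule has_integral_spike_finite[where S = "{?b}", OF _ spike indicator_integral]) simp
  then show ?thesis
    using False by (simp add: spread_def)
qed

lemma has_integral_dot_cut_diversity_threshold:
  assumes "finite V"
  shows "((\<lambda>t. dot V X (cut_diversity {v. h v \<le> t})) has_integral dot V X (spread h)) UNIV"
  unfolding dot_def using assms
  by (intro has_integral_sum has_integral_mult_right has_integral_cut_diversity_threshold)
     (auto intro: rev_finite_subset[OF assms])

lemma dot_spread_ge_of_cut_bound:
  assumes "finite V"
    and cut: "\<And>U. U \<subseteq> V \<Longrightarrow> M * (\<Sum>S\<in>boundary V U. D S) \<le> (\<Sum>A\<in>boundary V U. C A)"
  shows "M * dot V D (spread h) \<le> dot V C (spread h)"
proof (rule has_integral_le)
  show "((\<lambda>t. M * dot V D (cut_diversity {v. h v \<le> t})) has_integral M * dot V D (spread h)) UNIV"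
    using assms(1) by (intro has_integral_mult_right has_integral_dot_cut_diversity_threshold)
  show "((\<lambda>t. dot V C (cut_diversity {v. h v \<le> t})) has_integral dot V C (spread h)) UNIV"
    using assms(1) by (rule has_integral_dot_cut_diversity_threshold)
  fix t
  show "M * dot V D (cut_diversity {v. h v \<le> t}) \<le> dot V C (cut_diversity {v. h v \<le> t})"
    (* the threshold cut {h \<le> t} need not lie inside V; only its trace on V matters *)
    using cut[of "V \<inter> {v. h v \<le> t}"] assms(1)
    by (simp add: dot_cut_diversity boundary_Int_self)
qed

lemma dot_l1_embeddable_ge_of_cut_bound:
  assumes "finite V" "l1_embeddable V \<delta>"
    and "\<And>U. U \<subseteq> V \<Longrightarrow> M * (\<Sum>S\<in>boundary V U. D S) \<le> (\<Sum>A\<in>boundary V U. C A)"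
  shows "M * dot V D \<delta> \<le> dot V C \<delta>"
proof -
  obtain m \<phi> where \<phi>: "\<forall>A. A \<subseteq> V \<longrightarrow> \<delta> A = delta1 m (\<phi> ` A)"
    using assms(2) by (auto simp: l1_embeddable_def)
  have "M * dot V D \<delta> = (\<Sum>i<m. M * dot V D (spread (\<lambda>v. \<phi> v i)))"
    using dot_l1_embedding[OF assms(1) \<phi>] by (simp add: sum_distrib_left)
  also have "\<dots> \<le> (\<Sum>i<m. dot V C (spread (\<lambda>v. \<phi> v i)))"
    using assms(1,3) by (intro sum_mono dot_spread_ge_of_cut_bound) auto
  also have "\<dots> = dot V C \<delta>"
    using dot_l1_embedding[OF assms(1) \<phi>] by simp
  finally show ?thesis .
qed

lemma MinHypCut_attained:
  assumes "finite V" "\<exists>U. U \<subseteq> V \<and> (\<Sum>S\<in>boundary V U. D S) \<noteq> 0"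
  obtains U where "U \<subseteq> V" "(\<Sum>S\<in>boundary V U. D S) \<noteq> 0"
    "MinHypCut V C D = (\<Sum>A\<in>boundary V U. C A) / (\<Sum>S\<in>boundary V U. D S)"
proof -
  let ?ratios = "{(\<Sum>A\<in>boundary V U. C A) / (\<Sum>S\<in>boundary V U. D S) | U.
                   U \<subseteq> V \<and> (\<Sum>S\<in>boundary V U. D S) \<noteq> 0}"
  have "finite ?ratios"
    using assms(1) by (auto intro: finite_subset[of _ "(\<lambda>U. _ U / _ U) ` Pow V"])
  moreover have "?ratios \<noteq> {}"
    using assms(2) by blast
  ultimately have "MinHypCut V C D \<in> ?ratios"
    unfolding MinHypCut_def by (rule Min_in)
  then show ?thesis
    using that by blast
qed

lemma MinHypCut_mult_le_cut:
  assumes "finite V" "\<forall>R. R \<subseteq> V \<longrightarrow> C R \<ge> 0" "\<forall>S. S \<subseteq> V \<longrightarrow> D S \<ge> 0" "U \<subseteq> V"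
  shows "MinHypCut V C D * (\<Sum>S\<in>boundary V U. D S) \<le> (\<Sum>A\<in>boundary V U. C A)"
proof -
  have "(\<Sum>S\<in>boundary V U. D S) \<ge> 0" "(\<Sum>A\<in>boundary V U. C A) \<ge> 0"
    using assms(2,3) by (auto intro!: sum_nonneg simp: boundary_def)
  moreover have "MinHypCut V C D \<le> (\<Sum>A\<in>boundary V U. C A) / (\<Sum>S\<in>boundary V U. D S)"
    if "(\<Sum>S\<in>boundary V U. D S) \<noteq> 0"
    unfolding MinHypCut_def using that assms(1,4)
    by (intro Min_le) (auto intro: finite_subset[of _ "(\<lambda>U. _ U / _ U) ` Pow V"])
  ultimately show ?thesis
    by (cases "(\<Sum>S\<in>boundary V U. D S) = 0") (auto simp: pos_le_divide_eq)
qed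

lemma dot_nonneg:
  assumes "\<forall>S. S \<subseteq> V \<longrightarrow> D S \<ge> 0" "diversity V \<delta>"
  shows "dot V D \<delta> \<ge> 0"
  using assms unfolding dot_def diversity_def by (intro sum_nonneg mult_nonneg_nonneg) auto

theorem proposition17:
  fixes V :: "'a set" and C D :: "'a set \<Rightarrow> real"
  assumes "finite V"
    and "\<forall>R. R \<subseteq> V \<longrightarrow> C R \<ge> 0"
    and "\<forall>S. S \<subseteq> V \<longrightarrow> D S \<ge> 0"
    and "\<exists>U. U \<subseteq> V \<and> (\<Sum>S\<in>boundary V U. D S) \<noteq> 0"
  shows "(\<exists>\<delta>\<in>Delta1 V. dot V D \<delta> \<noteq> 0 \<and> dot V C \<delta> / dot V D \<delta> = MinHypCut V C D) \<and>
         (\<forall>\<delta>\<in>Delta1 V. dot V D \<delta> \<noteq> 0 \<longrightarrow> MinHypCut V C D \<le> dot V C \<delta> / dot V D \<delta>)"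
proof
  obtain U where U: "U \<subseteq> V" "(\<Sum>S\<in>boundary V U. D S) \<noteq> 0"
    "MinHypCut V C D = (\<Sum>A\<in>boundary V U. C A) / (\<Sum>S\<in>boundary V U. D S)"
    using MinHypCut_attained[OF assms(1,4)] by blast
  have "cut_diversity U \<in> Delta1 V"
    using assms(1) by (simp add: Delta1_def diversity_cut_diversity l1_embeddable_cut_diversity)
  then show "\<exists>\<delta>\<in>Delta1 V. dot V D \<delta> \<noteq> 0 \<and> dot V C \<delta> / dot V D \<delta> = MinHypCut V C D"
    using U assms(1) by (intro bexI[of _ "cut_diversity U"]) (auto simp: dot_cut_diversity)
next
  show "\<forall>\<delta>\<in>Delta1 V. dot V D \<delta> \<noteq> 0 \<longrightarrow> MinHypCut V C D \<le> dot V C \<delta> / dot V D \<delta>"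
  proof (intro ballI impI)
    fix \<delta> assume \<delta>: "\<delta> \<in> Delta1 V" "dot V D \<delta> \<noteq> 0"
    then have "dot V D \<delta> > 0"
      using dot_nonneg[OF assms(3)] by (force simp: Delta1_def)
    moreover have "MinHypCut V C D * dot V D \<delta> \<le> dot V C \<delta>"
      using \<delta>(1) assms(1-3)
      by (intro dot_l1_embeddable_ge_of_cut_bound MinHypCut_mult_le_cut) (auto simp: Delta1_def)
    ultimately show "MinHypCut V C D \<le> dot V C \<delta> / dot V D \<delta>"
      by (simp add: pos_le_divide_eq)
  qed
qed

end
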